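(* Let $q \geq 5$ be a prime power and let $\mathcal{X}$ be a plane curve of degree $q-1$ defined over $\mathbb{F}_q$ without $\mathbb{F}_q$-linear components with $\mathrm{N}_q(\mathcal{X}) = (q-1)^2$. Then $k_0 \leq q-4$.
   Context: $\mathcal{X}(\mathbb{F}_q)=\mathcal{X}\cap\mathbb{P}^2(\mathbb{F}_q)$, $\mathrm{N}_q(\mathcal{X})=\#\mathcal{X}(\mathbb{F}_q)$; "without $\mathbb{F}_q$-linear components" means no line defined over $\mathbb{F}_q$ is a component. For $0\le i\le q+1$, $a_i$ is the number of $\mathbb{F}_q$-lines $l$ with $\#(l\cap\mathcal{X}(\mathbb{F}_q))=i$, and $k_0 := \min\{i : a_i \neq 0\}$. *)

theory Defs
  imports Main "HOL-Library.Cardinality"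
begin

text \<open>Homogeneous polynomials in three variables X, Y, Z over a field, represented by
  their coefficient functions on exponent triples (i,j,k) (monomial X^i Y^j Z^k).\<close>

type_synonym 'a tpoly = "nat \<times> nat \<times> nat \<Rightarrow> 'a"

definition homog :: "nat \<Rightarrow> ('a::zero) tpoly \<Rightarrow> bool" where
  "homog d F \<longleftrightarrow> (\<forall>i j k. F (i,j,k) \<noteq> 0 \<longrightarrow> i + j + k = d)"

definition tpoly_mult :: "('a::comm_semiring_1) tpoly \<Rightarrow> 'a tpoly \<Rightarrow> 'a tpoly" where
  "tpoly_mult F G = (\<lambda>(i,j,k). \<Sum>a\<le>i. \<Sum>b\<le>j. \<Sum>c\<le>k. F (a,b,c) * G (i-a, j-b, k-c))"

definition linform :: "'a::zero \<Rightarrow> 'a \<Rightarrow> 'a \<Rightarrow> 'a tpoly" where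
  "linform a b c = (\<lambda>m. if m = (1,0,0) then a else if m = (0,1,0) then b
                        else if m = (0,0,1) then c else 0)"

definition tpoly_eval :: "nat \<Rightarrow> ('a::comm_semiring_1) tpoly \<Rightarrow> 'a \<times> 'a \<times> 'a \<Rightarrow> 'a" where
  "tpoly_eval d F = (\<lambda>(x,y,z). \<Sum>i\<le>d. \<Sum>j\<le>d. \<Sum>k\<le>d. F (i,j,k) * x^i * y^j * z^k)"

definition proj_class :: "('a::field) \<times> 'a \<times> 'a \<Rightarrow> ('a \<times> 'a \<times> 'a) set" where
  "proj_class v = {(l * fst v, l * fst (snd v), l * snd (snd v)) | l. l \<noteq> 0}"

definition P2 :: "('a::field \<times> 'a \<times> 'a) set set" where
  "P2 = {proj_class v | v. v \<noteq> (0,0,0)}"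

text \<open>F_q-lines of P^2(F_q), identified with their coefficient classes (a:b:c).\<close>
definition lines :: "('a::field \<times> 'a \<times> 'a) set set" where
  "lines = P2"

definition on_line :: "('a::field \<times> 'a \<times> 'a) set \<Rightarrow> ('a \<times> 'a \<times> 'a) set \<Rightarrow> bool" where
  "on_line l p \<longleftrightarrow> (\<forall>(a,b,c)\<in>l. \<forall>(x,y,z)\<in>p. a*x + b*y + c*z = 0)"

definition rat_points :: "nat \<Rightarrow> ('a::field) tpoly \<Rightarrow> ('a \<times> 'a \<times> 'a) set set" where
  "rat_points d F = {p \<in> P2. \<forall>v\<in>p. tpoly_eval d F v = 0}"

definition Nq :: "nat \<Rightarrow> ('a::field) tpoly \<Rightarrow> nat" where
  "Nq d F = card (rat_points d F)"

definition no_Fq_linear_components :: "nat \<Rightarrow> ('a::field) tpoly \<Rightarrow> bool" where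
  "no_Fq_linear_components d F \<longleftrightarrow>
     \<not> (\<exists>a b c G. (a,b,c) \<noteq> (0,0,0) \<and> homog (d - 1) G \<and> F = tpoly_mult (linform a b c) G)"

definition a_count :: "nat \<Rightarrow> ('a::field) tpoly \<Rightarrow> nat \<Rightarrow> nat" where
  "a_count d F i = card {l \<in> (lines :: ('a \<times> 'a \<times> 'a) set set).
                        card {p \<in> rat_points d F. on_line l p} = i}"

definition k0 :: "nat \<Rightarrow> ('a::field) tpoly \<Rightarrow> nat" where
  "k0 d F = (LEAST i. a_count d F i \<noteq> 0)"

end

theory Submission
  imports Defs "HOL-Computational_Algebra.Polynomial"
begin

(* A line carrying more than q - 1 points of X(F_q) would make its linear form L divide F:
   dividing F by L leaves a remainder without Z (say), which on the line is a binary form of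
   degree q - 1 with more than q - 1 projectively distinct zeros, hence zero. So every line
   meets X(F_q) in at most q - 1 points.
   If every line also met X(F_q) in at least q - 3 points, the complement C of X(F_q), which has
   q^2 + q + 1 - (q - 1)^2 = 3q points, would meet every line l in c_l \<in> {2, 3, 4} points.
   Counting incidences and pairs of points of C gives \<Sum> c_l = 3q (q + 1) and \<Sum> c_l^2 = 12 q^2,
   hence \<Sum> (c_l - 2) (c_l - 4) = 2 (q - 1) (q - 4), which is positive for q \<ge> 5 although
   every summand is \<le> 0. *)

lemma sum_atMost_truncate:
  "n \<le> m \<Longrightarrow> (\<And>i. n < i \<Longrightarrow> f i = 0) \<Longrightarrow> sum f {..m} = sum f {..(n::nat)}"
  by (rule sum.mono_neutral_right) auto

lemma sum3_delta:
  fixes i j k :: nat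
  shows "(\<Sum>\<alpha>\<le>i. \<Sum>\<beta>\<le>j. \<Sum>\<gamma>\<le>k.
            if \<alpha> = p \<and> \<beta> = r \<and> \<gamma> = s then f \<alpha> \<beta> \<gamma> else (0::'a::comm_monoid_add))
         = (if p \<le> i \<and> r \<le> j \<and> s \<le> k then f p r s else 0)"
proof -
  have nest: "(if \<alpha> = p \<and> \<beta> = r \<and> \<gamma> = s then x else 0) =
      (if \<alpha> = p then if \<beta> = r then if \<gamma> = s then x else 0 else 0 else (0::'a))" for \<alpha> \<beta> \<gamma> x
    by simp
  have pull: "(\<Sum>x\<in>A. if P then g x else 0) = (if P then \<Sum>x\<in>A. g x else (0::'a))"
    for P and A :: "nat set" and g
    by simp
  show ?thesis unfolding nest pull by (simp add: sum.delta)
qed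

lemma tpoly_mult_linform:
  fixes G :: "('a::comm_semiring_1) tpoly"
  shows "tpoly_mult (linform a b c) G (i,j,k) =
    (if 0 < i then a * G (i-1,j,k) else 0) + (if 0 < j then b * G (i,j-1,k) else 0)
    + (if 0 < k then c * G (i,j,k-1) else 0)"
proof -
  have split_linform: "linform a b c (\<alpha>,\<beta>,\<gamma>) * G (i-\<alpha>,j-\<beta>,k-\<gamma>) = 
     (if \<alpha> = 1 \<and> \<beta> = 0 \<and> \<gamma> = 0 then a * G (i-\<alpha>,j-\<beta>,k-\<gamma>) else 0) +
     (if \<alpha> = 0 \<and> \<beta> = 1 \<and> \<gamma> = 0 then b * G (i-\<alpha>,j-\<beta>,k-\<gamma>) else 0) +
     (if \<alpha> = 0 \<and> \<beta> = 0 \<and> \<gamma> = 1 then c * G (i-\<alpha>,j-\<beta>,k-\<gamma>) else 0)" for \<alpha> \<beta> \<gamma>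
    by (simp add: linform_def)
  have "tpoly_mult (linform a b c) G (i,j,k) = 
    (\<Sum>\<alpha>\<le>i. \<Sum>\<beta>\<le>j. \<Sum>\<gamma>\<le>k. (if \<alpha> = 1 \<and> \<beta> = 0 \<and> \<gamma> = 0 then a * G (i-\<alpha>,j-\<beta>,k-\<gamma>) else 0)) +
    (\<Sum>\<alpha>\<le>i. \<Sum>\<beta>\<le>j. \<Sum>\<gamma>\<le>k. (if \<alpha> = 0 \<and> \<beta> = 1 \<and> \<gamma> = 0 then b * G (i-\<alpha>,j-\<beta>,k-\<gamma>) else 0)) +
    (\<Sum>\<alpha>\<le>i. \<Sum>\<beta>\<le>j. \<Sum>\<gamma>\<le>k. (if \<alpha> = 0 \<and> \<beta> = 0 \<and> \<gamma> = 1 then c * G (i-\<alpha>,j-\<beta>,k-\<gamma>) else 0))"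
    unfolding tpoly_mult_def split_conv split_linform sum.distrib by simp
  also have "\<dots> = (if 0 < i then a * G (i-1,j,k) else 0) + (if 0 < j then b * G (i,j-1,k) else 0)
    + (if 0 < k then c * G (i,j,k-1) else 0)"
    unfolding sum3_delta by (simp add: Suc_le_eq)
  finally show ?thesis .
qed

lemma homog_linform_mult:
  assumes "homog n G"
  shows "homog (Suc n) (tpoly_mult (linform a b c) G)"
  unfolding homog_def
proof (intro allI impI)
  fix i j k
  assume "tpoly_mult (linform a b c) G (i,j,k) \<noteq> 0"
  then have "(0 < i \<and> G (i-1,j,k) \<noteq> 0) \<or> (0 < j \<and> G (i,j-1,k) \<noteq> 0) \<or> (0 < k \<and> G (i,j,k-1) \<noteq> 0)"
    unfolding tpoly_mult_linform by (auto split: if_splits)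
  then show "i + j + k = Suc n"
    using assms unfolding homog_def by (elim disjE conjE) force+
qed

lemma tpoly_eval_extend_ranges:
  fixes G :: "('a::comm_semiring_1) tpoly"
  assumes "homog n G" "n \<le> A" "n \<le> B" "n \<le> C"
  shows "(\<Sum>i\<le>A. \<Sum>j\<le>B. \<Sum>k\<le>C. G (i,j,k) * x^i * y^j * z^k) = tpoly_eval n G (x,y,z)"
proof -
  have G0: "G (i,j,k) = 0" if "n < i \<or> n < j \<or> n < k" for i j k
    using assms(1) that unfolding homog_def by fastforce
  have "(\<Sum>i\<le>A. \<Sum>j\<le>B. \<Sum>k\<le>C. G (i,j,k) * x^i * y^j * z^k)
      = (\<Sum>i\<le>n. \<Sum>j\<le>B. \<Sum>k\<le>C. G (i,j,k) * x^i * y^j * z^k)"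
    by (rule sum_atMost_truncate) (use assms G0 in auto)
  also have "\<dots> = (\<Sum>i\<le>n. \<Sum>j\<le>n. \<Sum>k\<le>C. G (i,j,k) * x^i * y^j * z^k)"
    by (intro sum.cong refl sum_atMost_truncate) (use assms G0 in auto)
  also have "\<dots> = (\<Sum>i\<le>n. \<Sum>j\<le>n. \<Sum>k\<le>n. G (i,j,k) * x^i * y^j * z^k)"
    by (intro sum.cong refl sum_atMost_truncate) (use assms G0 in auto)
  finally show ?thesis unfolding tpoly_eval_def by simp
qed

lemma tpoly_eval_linform_mult:
  fixes G :: "('a::comm_semiring_1) tpoly"
  assumes "homog n G"
  shows "tpoly_eval (Suc n) (tpoly_mult (linform a b c) G) (x,y,z)
         = (a*x + b*y + c*z) * tpoly_eval n G (x,y,z)"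
proof -
  let ?S = "Suc n"
  have shift_X: "(\<Sum>i\<le>Suc m. \<Sum>j\<le>B. \<Sum>k\<le>C. (if 0<i then a*G(i-1,j,k) else 0)*x^i*y^j*z^k)
      = a*x*(\<Sum>i\<le>m. \<Sum>j\<le>B. \<Sum>k\<le>C. G(i,j,k)*x^i*y^j*z^k)" for m B C
    by (simp add: sum.atMost_Suc_shift sum_distrib_left mult_ac del: sum.atMost_Suc)
  have shift_Y: "(\<Sum>j\<le>Suc m. \<Sum>k\<le>C. (if 0<j then b*G(i,j-1,k) else 0)*x^i*y^j*z^k)
      = b*y*(\<Sum>j\<le>m. \<Sum>k\<le>C. G(i,j,k)*x^i*y^j*z^k)" for i m C
    by (simp add: sum.atMost_Suc_shift sum_distrib_left mult_ac del: sum.atMost_Suc)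
  have shift_Z: "(\<Sum>k\<le>Suc m. (if 0<k then c*G(i,j,k-1) else 0)*x^i*y^j*z^k)
      = c*z*(\<Sum>k\<le>m. G(i,j,k)*x^i*y^j*z^k)" for i j m
    by (simp add: sum.atMost_Suc_shift sum_distrib_left mult_ac del: sum.atMost_Suc)
  have "tpoly_eval ?S (tpoly_mult (linform a b c) G) (x,y,z) =
    (\<Sum>i\<le>?S. \<Sum>j\<le>?S. \<Sum>k\<le>?S. (if 0<i then a*G(i-1,j,k) else 0)*x^i*y^j*z^k) +
    (\<Sum>i\<le>?S. \<Sum>j\<le>?S. \<Sum>k\<le>?S. (if 0<j then b*G(i,j-1,k) else 0)*x^i*y^j*z^k) +
    (\<Sum>i\<le>?S. \<Sum>j\<le>?S. \<Sum>k\<le>?S. (if 0<k then c*G(i,j,k-1) else 0)*x^i*y^j*z^k)"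
    unfolding tpoly_eval_def split_conv tpoly_mult_linform distrib_right sum.distrib by simp
  also have "\<dots> = a*x*(\<Sum>i\<le>n. \<Sum>j\<le>?S. \<Sum>k\<le>?S. G(i,j,k)*x^i*y^j*z^k) +
    b*y*(\<Sum>i\<le>?S. \<Sum>j\<le>n. \<Sum>k\<le>?S. G(i,j,k)*x^i*y^j*z^k) +
    c*z*(\<Sum>i\<le>?S. \<Sum>j\<le>?S. \<Sum>k\<le>n. G(i,j,k)*x^i*y^j*z^k)"
    by (simp only: shift_X shift_Y shift_Z sum_distrib_left)
  also have "\<dots> = (a*x + b*y + c*z) * tpoly_eval n G (x,y,z)"
    by (simp only: tpoly_eval_extend_ranges[OF assms] le_refl le_SucI distrib_right)
  finally show ?thesis .
qed

lemma tpoly_eval_diff: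
  fixes A B :: "('a::comm_ring_1) tpoly"
  shows "tpoly_eval d (\<lambda>m. A m - B m) v = tpoly_eval d A v - tpoly_eval d B v"
  by (cases v) (simp add: tpoly_eval_def left_diff_distrib sum_subtractf)

lemma tpoly_eval_without_Z:
  fixes R :: "('a::comm_semiring_1) tpoly"
  assumes hR: "homog d R" and R_Z: "\<And>i j k. 0 < k \<Longrightarrow> R (i,j,k) = 0"
  shows "tpoly_eval d R (x,y,z) = (\<Sum>i\<le>d. R (i,d-i,0) * x^i * y^(d-i))"
proof -
  have "tpoly_eval d R (x,y,z) = (\<Sum>i\<le>d. \<Sum>j\<le>d. \<Sum>k\<le>0. R(i,j,k)*x^i*y^j*z^k)"
    unfolding tpoly_eval_def split_conv
    by (intro sum.cong refl sum_atMost_truncate) (auto simp: R_Z)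
  also have "\<dots> = (\<Sum>i\<le>d. \<Sum>j\<le>d. if j = d - i then R(i,j,0)*x^i*y^j else 0)"
  proof (intro sum.cong refl)
    fix i j assume "i \<in> {..d}" "j \<in> {..d}"
    have "R (i,j,0) = 0" if "j \<noteq> d - i"
      using hR that unfolding homog_def by (metis add_0_right diff_add_inverse)
    then show "(\<Sum>k\<le>0. R(i,j,k)*x^i*y^j*z^k) = (if j = d - i then R(i,j,0)*x^i*y^j else 0)"
      by auto
  qed
  also have "\<dots> = (\<Sum>i\<le>d. R (i,d-i,0) * x^i * y^(d-i))"
    by (intro sum.cong refl) auto
  finally show ?thesis .
qed

section \<open>Division by a linear form\<close>

(* The coefficient of X^i Y^j Z^k of the quotient is chosen so that the coefficient of
   X^i Y^j Z^(k+1) of (aX + bY + cZ) * quotient agrees with that of F; this needs c \<noteq> 0. *)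
function linform_quot :: "('a::field) tpoly \<Rightarrow> 'a \<Rightarrow> 'a \<Rightarrow> 'a \<Rightarrow> 'a tpoly" where
  "linform_quot F a b c (i,j,k) =
     (F (i,j,Suc k) - (if 0 < i then a * linform_quot F a b c (i-1,j,Suc k) else 0)
                    - (if 0 < j then b * linform_quot F a b c (i,j-1,Suc k) else 0)) / c"
  by pat_completeness auto
termination by (relation "measure (\<lambda>(F,a,b,c,i,j,k). i + j)") auto

declare linform_quot.simps [simp del]

lemma homog_linform_quot:
  assumes "homog (Suc n) F"
  shows "homog n (linform_quot F a b c)"
proof -
  have "linform_quot F a b c (i,j,k) = 0" if "homog (Suc n) F" "i + j + k \<noteq> n"
    for F :: "'a tpoly" and i j k
    using that
  proof (induction F a b c "(i,j,k)" arbitrary: i j k rule: linform_quot.induct)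
    case (1 F a b c i j k)
    have "F (i,j,Suc k) = 0"
      using "1.prems" unfolding homog_def by (metis add_Suc_right nat.inject)
    with 1 show ?case by (subst linform_quot.simps) auto
  qed
  then show ?thesis using assms unfolding homog_def by blast
qed

lemma linform_mult_quot_coeff:
  fixes F :: "('a::field) tpoly"
  assumes "c \<noteq> 0" "0 < k"
  shows "tpoly_mult (linform a b c) (linform_quot F a b c) (i,j,k) = F (i,j,k)"
proof -
  obtain k' where k: "k = Suc k'" using assms(2) gr0_implies_Suc by blast
  show ?thesis
    using linform_quot.simps[of F a b c i j k'] assms(1)
    unfolding tpoly_mult_linform k by (simp add: field_simps)
qed

section \<open>Zeros of binary forms\<close>

lemma card_le_degree_if_binary_form_zeros:
  fixes r :: "nat \<Rightarrow> 'a::field" and d :: nat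
  defines "P \<equiv> \<Sum>i\<le>d. monom (r i) i"
  assumes "finite S" "P \<noteq> 0"
    and zero: "\<And>x y. (x,y) \<in> S \<Longrightarrow> y \<noteq> 0 \<and> (\<Sum>i\<le>d. r i * x^i * y^(d-i)) = 0"
    and distinct: "\<And>x y t. (x,y) \<in> S \<Longrightarrow> (t*x, t*y) \<in> S \<Longrightarrow> (t*x, t*y) = (x,y)"
  shows "card S \<le> degree P"
proof -
  \<comment> \<open>Dehomogenising, \<open>(x, y) \<mapsto> x / y\<close> maps the zeros injectively to roots of \<open>P\<close>.\<close>
  define f where "f = (\<lambda>(x,y). x / y :: 'a)"
  have "inj_on f S"
  proof (rule inj_onI, clarify)
    fix x y x' y'
    assume xy: "(x,y) \<in> S" "(x',y') \<in> S" and f_eq: "f (x,y) = f (x',y')"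
    have "y \<noteq> 0" "y' \<noteq> 0" using zero xy by auto
    then have "(x',y') = ((y'/y) * x, (y'/y) * y)"
      using f_eq unfolding f_def by (auto simp: field_simps)
    then show "x = x' \<and> y = y'" using distinct[OF xy(1), of "y'/y"] xy(2) by auto
  qed
  moreover have "f ` S \<subseteq> {t. poly P t = 0}"
  proof clarify
    fix x y assume xy: "(x,y) \<in> S"
    have "poly P (x/y) * y^d = (\<Sum>i\<le>d. r i * x^i * y^(d-i))"
      unfolding P_def poly_sum poly_monom sum_distrib_right
    proof (intro sum.cong refl)
      fix i assume "i \<in> {..d}"
      then have "y^d = y^i * y^(d-i)" by (simp flip: power_add)
      then show "r i * (x/y)^i * y^d = r i * x^i * y^(d-i)"
        using zero[OF xy] by (simp add: power_divide)
    qed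
    then show "poly P (f (x,y)) = 0" using zero[OF xy] unfolding f_def by simp
  qed
  ultimately have "card S \<le> card {t. poly P t = 0}"
    by (metis card_image card_mono poly_roots_finite \<open>P \<noteq> 0\<close>)
  also have "\<dots> \<le> degree P" by (rule card_poly_roots_bound[OF \<open>P \<noteq> 0\<close>])
  finally show ?thesis .
qed

lemma coeff_sum_monom:
  "coeff (\<Sum>i\<le>d. monom (r i) i) k = (if k \<le> d then r k else 0)"
  unfolding coeff_sum coeff_monom by (simp add: sum.delta)

lemma degree_lt_if_binary_form_zero_at_infinity:
  fixes r :: "nat \<Rightarrow> 'a::field"
  assumes "x \<noteq> 0" "(\<Sum>i\<le>d. r i * x^i * 0^(d-i)) = 0" "(\<Sum>i\<le>d. monom (r i) i) \<noteq> 0"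
  shows "degree (\<Sum>i\<le>d. monom (r i) i) < d"
proof -
  have "(\<Sum>i\<le>d. r i * x^i * 0^(d-i)) = (\<Sum>i\<le>d. if i = d then r d * x^d else 0)"
    by (intro sum.cong refl) (auto simp: power_0_left)
  then have "r d = 0" using assms(1,2) by simp
  have "0 < d"
  proof (rule ccontr)
    assume "\<not> 0 < d"
    then have "coeff (\<Sum>i\<le>d. monom (r i) i) k = 0" for k
      using \<open>r d = 0\<close> by (auto simp: coeff_sum_monom)
    then show False using assms(3) by (simp add: poly_eqI)
  qed
  have "coeff (\<Sum>i\<le>d. monom (r i) i) k = 0" if "d - 1 < k" for k
    using that \<open>0 < d\<close> \<open>r d = 0\<close> by (cases "k = d") (auto simp: coeff_sum_monom)
  then have "degree (\<Sum>i\<le>d. monom (r i) i) \<le> d - 1" by (intro degree_le) auto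
  then show ?thesis using \<open>0 < d\<close> by linarith
qed

lemma card_zeros_at_infinity_le_1:
  fixes S :: "('a::field \<times> 'a) set"
  assumes "finite S"
    and nonzero: "\<And>x y. (x,y) \<in> S \<Longrightarrow> (x,y) \<noteq> (0,0)"
    and distinct: "\<And>x y t. (x,y) \<in> S \<Longrightarrow> (t*x, t*y) \<in> S \<Longrightarrow> (t*x, t*y) = (x,y)"
  shows "card {p \<in> S. snd p = 0} \<le> 1"
proof -
  have "p = p'" if pp: "p \<in> S" "snd p = 0" "p' \<in> S" "snd p' = 0" for p p'
  proof -
    obtain x x' where p: "p = (x,0)" "p' = (x',0)" using pp by (metis prod.collapse)
    then have "x \<noteq> 0" using nonzero pp(1) by blast
    then show "p = p'" using distinct[of x 0 "x'/x"] p pp(1,3) by simp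
  qed
  then show ?thesis using \<open>finite S\<close> by (simp add: card_le_Suc0_iff_eq)
qed

lemma binary_form_coeffs_eq_0:
  fixes r :: "nat \<Rightarrow> 'a::field"
  assumes "finite S" "d < card S"
    and zero: "\<And>x y. (x,y) \<in> S \<Longrightarrow> (x,y) \<noteq> (0,0) \<and> (\<Sum>i\<le>d. r i * x^i * y^(d-i)) = 0"
    and distinct: "\<And>x y t. (x,y) \<in> S \<Longrightarrow> (t*x, t*y) \<in> S \<Longrightarrow> (t*x, t*y) = (x,y)"
    and "i \<le> d"
  shows "r i = 0"
proof -
  define P where "P = (\<Sum>i\<le>d. monom (r i) i)"
  define S0 where "S0 = {p\<in>S. snd p = 0}"
  define S1 where "S1 = {p\<in>S. snd p \<noteq> 0}"
  have "S = S0 \<union> S1" "S0 \<inter> S1 = {}" unfolding S0_def S1_def by auto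
  then have card_S: "card S = card S0 + card S1"
    using \<open>finite S\<close> by (simp add: card_Un_disjoint)
  have "card S0 \<le> 1"
    unfolding S0_def using card_zeros_at_infinity_le_1 \<open>finite S\<close> zero distinct by blast
  have "P = 0"
  proof (rule ccontr)
    assume "P \<noteq> 0"
    have "degree P + card S0 \<le> d"
    proof (cases "S0 = {}")
      case True
      then show ?thesis unfolding P_def by (auto intro: degree_le simp: coeff_sum_monom)
    next
      case False
      then obtain x where "(x,0) \<in> S" unfolding S0_def by auto
      then have "degree P < d"
        using zero \<open>P \<noteq> 0\<close> unfolding P_def by (intro degree_lt_if_binary_form_zero_at_infinity) auto
      then show ?thesis using \<open>card S0 \<le> 1\<close> by linarith
    qed
    moreover have "card S1 \<le> degree P"
      unfolding P_def
    proof (rule card_le_degree_if_binary_form_zeros)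
      show "finite S1" using \<open>finite S\<close> unfolding S1_def by simp
      show "(\<Sum>i\<le>d. monom (r i) i) \<noteq> 0" using \<open>P \<noteq> 0\<close> unfolding P_def .
      show "y \<noteq> 0 \<and> (\<Sum>i\<le>d. r i * x^i * y^(d-i)) = 0" if "(x,y) \<in> S1" for x y
        using that zero unfolding S1_def by auto
      show "(t*x, t*y) = (x,y)" if "(x,y) \<in> S1" "(t*x, t*y) \<in> S1" for x y t
        using that distinct[of x y t] unfolding S1_def by simp
    qed
    ultimately show False using card_S \<open>d < card S\<close> by linarith
  qed
  then show ?thesis using coeff_sum_monom[of r d i] \<open>i \<le> d\<close> unfolding P_def by simp
qed

definition scale3 :: "'a::times \<Rightarrow> 'a \<times> 'a \<times> 'a \<Rightarrow> 'a \<times> 'a \<times> 'a" where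
  "scale3 t v = (t * fst v, t * fst (snd v), t * snd (snd v))"

lemma scale3_simp [simp]: "scale3 t (x,y,z) = (t*x, t*y, t*z)"
  by (simp add: scale3_def)

definition zeros_on_line ::
  "nat \<Rightarrow> ('a::field) tpoly \<Rightarrow> 'a \<Rightarrow> 'a \<Rightarrow> 'a \<Rightarrow> ('a \<times> 'a \<times> 'a) set \<Rightarrow> bool" where
  "zeros_on_line d F a b c T \<longleftrightarrow> finite T \<and>
     (\<forall>(x,y,z)\<in>T. (x,y,z) \<noteq> (0,0,0) \<and> a*x + b*y + c*z = 0 \<and> tpoly_eval d F (x,y,z) = 0) \<and>
     (\<forall>v\<in>T. \<forall>t. scale3 t v \<in> T \<longrightarrow> scale3 t v = v)"

lemma Z_free_form_eq_0_if_zeros_on_line: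
  fixes R :: "('a::field) tpoly"
  assumes "c \<noteq> 0" and hR: "homog d R" and R_Z: "\<And>i j k. 0 < k \<Longrightarrow> R (i,j,k) = 0"
    and T: "zeros_on_line d R a b c T" and "d < card T"
  shows "R = (\<lambda>_. 0)"
proof -
  have on_line: "(x,y,z) \<noteq> (0,0,0)" "a*x + b*y + c*z = 0"
    "(\<Sum>i\<le>d. R (i, d - i, 0) * x^i * y^(d - i)) = 0" if "(x,y,z) \<in> T" for x y z
    using T that tpoly_eval_without_Z[OF hR R_Z] unfolding zeros_on_line_def by auto
  \<comment> \<open>Since \<open>c \<noteq> 0\<close>, a point of the line is determined by its first two coordinates.\<close>
  have z_unique: "z' = t * z" if "(x,y,z) \<in> T" "(t*x, t*y, z') \<in> T" for x y z z' t
  proof -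
    have "c * z' - c * (t * z) = (a*(t*x) + b*(t*y) + c*z') - t * (a*x + b*y + c*z)"
      by (simp add: algebra_simps)
    then show ?thesis using on_line(2)[OF that(1)] on_line(2)[OF that(2)] \<open>c \<noteq> 0\<close> by simp
  qed
  define S where "S = (\<lambda>(x,y,z). (x,y)) ` T"
  have "inj_on (\<lambda>(x,y,z). (x,y)) T"
    by (rule inj_onI, clarsimp) (metis mult_1 z_unique)
  then have "card S = card T" unfolding S_def by (rule card_image)
  have R_binary_coeff: "R (i, d - i, 0) = 0" if "i \<le> d" for i
  proof (rule binary_form_coeffs_eq_0[where S=S and r="\<lambda>i. R (i, d - i, 0)"])
    show "finite S" using T unfolding S_def zeros_on_line_def by simp
    show "d < card S" using \<open>card S = card T\<close> \<open>d < card T\<close> by simp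
    show "(x,y) \<noteq> (0,0) \<and> (\<Sum>i\<le>d. R (i, d - i, 0) * x^i * y^(d - i)) = 0"
      if "(x,y) \<in> S" for x y
    proof -
      obtain z where xyz: "(x,y,z) \<in> T" using \<open>(x,y) \<in> S\<close> unfolding S_def by auto
      then show ?thesis using on_line[OF xyz] \<open>c \<noteq> 0\<close> by auto
    qed
    show "(t*x, t*y) = (x,y)" if xy: "(x,y) \<in> S" "(t*x, t*y) \<in> S" for x y t
    proof -
      obtain z z' where "(x,y,z) \<in> T" "(t*x, t*y, z') \<in> T"
        using xy unfolding S_def by force
      with z_unique have "scale3 t (x,y,z) \<in> T" "(x,y,z) \<in> T" by auto
      then show ?thesis using T unfolding zeros_on_line_def by fastforce
    qed
  qed (use that in simp)
  have "R (i,j,k) = 0" for i j k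
  proof (cases "k = 0 \<and> i + j = d")
    case True
    then have "j = d - i" "i \<le> d" by auto
    then show ?thesis using True R_binary_coeff by simp
  next
    case False
    then show ?thesis using hR R_Z unfolding homog_def by (metis add_0_right gr0I)
  qed
  then show ?thesis by (auto simp: fun_eq_iff)
qed

lemma linform_factor_if_zeros_on_line_Z:
  fixes F :: "('a::field) tpoly"
  assumes hF: "homog (Suc n) F" and "c \<noteq> 0"
    and T: "zeros_on_line (Suc n) F a b c T" and "Suc n < card T"
  shows "\<exists>G. homog n G \<and> F = tpoly_mult (linform a b c) G"
proof -
  define G where "G = linform_quot F a b c"
  define R where "R = (\<lambda>m. F m - tpoly_mult (linform a b c) G m)"
  have hG: "homog n G" unfolding G_def by (rule homog_linform_quot[OF hF])
  have hR: "homog (Suc n) R"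
    unfolding homog_def
  proof (intro allI impI)
    fix i j k assume "R (i,j,k) \<noteq> 0"
    then have "F (i,j,k) \<noteq> 0 \<or> tpoly_mult (linform a b c) G (i,j,k) \<noteq> 0" unfolding R_def by auto
    then show "i + j + k = Suc n" using hF homog_linform_mult[OF hG] unfolding homog_def by blast
  qed
  have R_Z: "R (i,j,k) = 0" if "0 < k" for i j k
    unfolding R_def G_def using linform_mult_quot_coeff[OF \<open>c \<noteq> 0\<close> that] by simp
  have "zeros_on_line (Suc n) R a b c T"
    using T unfolding zeros_on_line_def R_def tpoly_eval_diff tpoly_eval_linform_mult[OF hG]
    by auto
  then have "R = (\<lambda>_. 0)"
    using Z_free_form_eq_0_if_zeros_on_line[OF \<open>c \<noteq> 0\<close> hR R_Z] \<open>Suc n < card T\<close> by blast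
  then have "F = tpoly_mult (linform a b c) G"
    unfolding R_def by (auto simp: fun_eq_iff)
  then show ?thesis using hG by blast
qed

definition swap_YZ :: "'b \<times> 'b \<times> 'b \<Rightarrow> 'b \<times> 'b \<times> 'b" where
  "swap_YZ = (\<lambda>(x,y,z). (x,z,y))"

definition swap_XZ :: "'b \<times> 'b \<times> 'b \<Rightarrow> 'b \<times> 'b \<times> 'b" where
  "swap_XZ = (\<lambda>(x,y,z). (z,y,x))"

lemma swap_simps [simp]:
  "swap_YZ (x,y,z) = (x,z,y)" "swap_XZ (x,y,z) = (z,y,x)"
  by (simp_all add: swap_YZ_def swap_XZ_def)

lemma swap_comp_swap [simp]: "swap_YZ \<circ> swap_YZ = id" "swap_XZ \<circ> swap_XZ = id"
  by (auto simp: swap_YZ_def swap_XZ_def)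

lemma inj_swap: "inj swap_YZ" "inj swap_XZ"
  by (auto intro!: injI simp: swap_YZ_def swap_XZ_def)

lemma scale3_swap [simp]:
  "scale3 t (swap_YZ v) = swap_YZ (scale3 t v)" "scale3 t (swap_XZ v) = swap_XZ (scale3 t v)"
  by (cases v; simp)+

lemma homog_comp_swap:
  "homog d F \<Longrightarrow> homog d (F \<circ> swap_YZ)" "homog d F \<Longrightarrow> homog d (F \<circ> swap_XZ)"
  by (clarsimp simp: homog_def, metis add.commute add.left_commute)+

lemma tpoly_eval_as_sum:
  "tpoly_eval d F (x,y,z) = (\<Sum>(i,j,k)\<in>{..d} \<times> {..d} \<times> {..d}. F (i,j,k) * x^i * y^j * z^k)"
  by (simp add: tpoly_eval_def sum.cartesian_product)

lemma tpoly_eval_comp_swap: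
  "tpoly_eval d (F \<circ> swap_YZ) (swap_YZ v) = tpoly_eval d F v"
  "tpoly_eval d (F \<circ> swap_XZ) (swap_XZ v) = tpoly_eval d F v"
proof -
  obtain x y z where v: "v = (x,y,z)" by (cases v)
  show "tpoly_eval d (F \<circ> swap_YZ) (swap_YZ v) = tpoly_eval d F v"
    unfolding v swap_simps tpoly_eval_as_sum
    by (rule sum.reindex_bij_witness[where i=swap_YZ and j=swap_YZ]) (auto simp: mult_ac)
  show "tpoly_eval d (F \<circ> swap_XZ) (swap_XZ v) = tpoly_eval d F v"
    unfolding v swap_simps tpoly_eval_as_sum
    by (rule sum.reindex_bij_witness[where i=swap_XZ and j=swap_XZ]) (auto simp: mult_ac)
qed

lemma linform_mult_comp_swap:
  "tpoly_mult (linform a c b) (G \<circ> swap_YZ) = tpoly_mult (linform a b c) G \<circ> swap_YZ"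
  "tpoly_mult (linform c b a) (G \<circ> swap_XZ) = tpoly_mult (linform a b c) G \<circ> swap_XZ"
  by (rule ext, clarify, simp add: tpoly_mult_linform add_ac)+

lemma zeros_on_line_image:
  assumes T: "zeros_on_line d F a b c T" and "inj \<sigma>"
    and scale3_\<sigma>: "\<And>t v. scale3 t (\<sigma> v) = \<sigma> (scale3 t v)"
    and on_line: "\<And>v. v \<in> T \<Longrightarrow> (case \<sigma> v of (x,y,z) \<Rightarrow>
          (x,y,z) \<noteq> (0,0,0) \<and> a'*x + b'*y + c'*z = 0 \<and> tpoly_eval d F' (x,y,z) = 0)"
  shows "zeros_on_line d F' a' b' c' (\<sigma> ` T)"
  unfolding zeros_on_line_def
proof (intro conjI)
  show "finite (\<sigma> ` T)" using T unfolding zeros_on_line_def by simp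
  show "\<forall>(x,y,z)\<in>\<sigma> ` T. (x,y,z) \<noteq> (0,0,0) \<and> a'*x + b'*y + c'*z = 0 \<and> tpoly_eval d F' (x,y,z) = 0"
    using on_line by auto
  show "\<forall>w\<in>\<sigma> ` T. \<forall>t. scale3 t w \<in> \<sigma> ` T \<longrightarrow> scale3 t w = w"
  proof (intro ballI allI impI)
    fix w t assume "w \<in> \<sigma> ` T" and scaled: "scale3 t w \<in> \<sigma> ` T"
    then obtain v where v: "v \<in> T" "w = \<sigma> v" by blast
    from scaled have "scale3 t v \<in> T"
      unfolding v(2) scale3_\<sigma> by (simp add: inj_image_mem_iff[OF \<open>inj \<sigma>\<close>])
    then have "scale3 t v = v" using T v(1) unfolding zeros_on_line_def by blast
    then show "scale3 t w = w" by (simp add: v(2) scale3_\<sigma>)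
  qed
qed

lemma zeros_on_line_swap:
  assumes T: "zeros_on_line d F a b c T"
  shows "zeros_on_line d (F \<circ> swap_YZ) a c b (swap_YZ ` T)"
    and "zeros_on_line d (F \<circ> swap_XZ) c b a (swap_XZ ` T)"
  by (rule zeros_on_line_image[OF T inj_swap(1) scale3_swap(1)],
      use T tpoly_eval_comp_swap(1)[of d F] in \<open>force simp: zeros_on_line_def add_ac\<close>)
     (rule zeros_on_line_image[OF T inj_swap(2) scale3_swap(2)],
      use T tpoly_eval_comp_swap(2)[of d F] in \<open>force simp: zeros_on_line_def add_ac\<close>)

lemma linform_factor_if_zeros_on_line:
  fixes F :: "('a::field) tpoly"
  assumes hF: "homog (Suc n) F" and "(a,b,c) \<noteq> (0,0,0)"
    and T: "zeros_on_line (Suc n) F a b c T" and card_T: "Suc n < card T"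
  shows "\<exists>G. homog n G \<and> F = tpoly_mult (linform a b c) G"
proof -
  consider "c \<noteq> 0" | "b \<noteq> 0" | "a \<noteq> 0" using \<open>(a,b,c) \<noteq> (0,0,0)\<close> by auto
  then show ?thesis
  proof cases
    case 1
    then show ?thesis using linform_factor_if_zeros_on_line_Z[OF hF _ T card_T] by blast
  next
    case 2
    have "Suc n < card (swap_YZ ` T)"
      using card_T by (simp only: card_image[OF inj_on_subset[OF inj_swap(1) subset_UNIV]])
    then obtain G where G: "homog n G" "F \<circ> swap_YZ = tpoly_mult (linform a c b) G"
      using linform_factor_if_zeros_on_line_Z[OF homog_comp_swap(1)[OF hF] 2 zeros_on_line_swap(1)[OF T]]
      by blast
    have "F = tpoly_mult (linform a c b) G \<circ> swap_YZ"
      by (simp flip: G(2) add: comp_assoc)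
    also have "\<dots> = tpoly_mult (linform a b c) (G \<circ> swap_YZ)"
      by (rule linform_mult_comp_swap(1)[symmetric])
    finally show ?thesis using homog_comp_swap(1)[OF G(1)] by blast
  next
    case 3
    have "Suc n < card (swap_XZ ` T)"
      using card_T by (simp only: card_image[OF inj_on_subset[OF inj_swap(2) subset_UNIV]])
    then obtain G where G: "homog n G" "F \<circ> swap_XZ = tpoly_mult (linform c b a) G"
      using linform_factor_if_zeros_on_line_Z[OF homog_comp_swap(2)[OF hF] 3 zeros_on_line_swap(2)[OF T]]
      by blast
    have "F = tpoly_mult (linform c b a) G \<circ> swap_XZ"
      by (simp flip: G(2) add: comp_assoc)
    also have "\<dots> = tpoly_mult (linform a b c) (G \<circ> swap_XZ)"
      by (rule linform_mult_comp_swap(2)[symmetric])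
    finally show ?thesis using homog_comp_swap(2)[OF G(1)] by blast
  qed
qed

section \<open>The projective plane over a finite field\<close>

definition dot3 :: "'a::comm_ring_1 \<times> 'a \<times> 'a \<Rightarrow> 'a \<times> 'a \<times> 'a \<Rightarrow> 'a" where
  "dot3 u v = fst u * fst v + fst (snd u) * fst (snd v) + snd (snd u) * snd (snd v)"

definition cross3 :: "'a::comm_ring_1 \<times> 'a \<times> 'a \<Rightarrow> 'a \<times> 'a \<times> 'a \<Rightarrow> 'a \<times> 'a \<times> 'a" where
  "cross3 u v = (fst (snd u) * snd (snd v) - snd (snd u) * fst (snd v),
                 snd (snd u) * fst v - fst u * snd (snd v),
                 fst u * fst (snd v) - fst (snd u) * fst v)"

lemma mem_proj_class_iff: "w \<in> proj_class v \<longleftrightarrow> (\<exists>t. t \<noteq> 0 \<and> w = scale3 t v)"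
  unfolding proj_class_def scale3_def by auto

lemma mem_proj_class_self: "v \<in> proj_class (v::'a::field \<times> 'a \<times> 'a)"
  unfolding mem_proj_class_iff scale3_def by (rule exI[of _ 1]) auto

lemma scale3_scale3: "scale3 s (scale3 t v) = scale3 (s * t) (v::'a::field \<times> 'a \<times> 'a)"
  unfolding scale3_def by (simp add: mult.assoc)

lemma scale3_neq_0: "v \<noteq> (0,0,0) \<Longrightarrow> t \<noteq> 0 \<Longrightarrow> scale3 t v \<noteq> (0,0,0::'a::field)"
  unfolding scale3_def by (cases v) auto

lemma proj_class_eq_if_mem:
  assumes "w \<in> proj_class v"
  shows "proj_class w = proj_class (v::'a::field \<times> 'a \<times> 'a)"
proof -
  obtain t where t: "t \<noteq> 0" "w = scale3 t v" using assms unfolding mem_proj_class_iff by auto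
  have "x \<in> proj_class w \<longleftrightarrow> x \<in> proj_class v" for x
  proof
    assume "x \<in> proj_class w"
    then obtain s where "s \<noteq> 0" "x = scale3 (s * t) v"
      unfolding mem_proj_class_iff t(2) scale3_scale3 by auto
    then show "x \<in> proj_class v"
      using t(1) unfolding mem_proj_class_iff by (intro exI[of _ "s * t"]) simp
  next
    assume "x \<in> proj_class v"
    then obtain s where "s \<noteq> 0" "x = scale3 (s / t) w"
      unfolding mem_proj_class_iff t(2) scale3_scale3 using t(1) by auto
    then show "x \<in> proj_class w"
      using t(1) unfolding mem_proj_class_iff by (intro exI[of _ "s / t"]) simp
  qed
  then show ?thesis by blast
qed

lemma nonzero_if_mem_proj_class:
  assumes "v \<noteq> (0,0,0)" "w \<in> proj_class v"
  shows "w \<noteq> (0,0,0::'a::field)"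
proof -
  obtain t where "t \<noteq> 0" "w = scale3 t v" using assms(2) unfolding mem_proj_class_iff by blast
  then show ?thesis using scale3_neq_0[OF assms(1)] by simp
qed

lemma P2E:
  assumes "p \<in> P2"
  obtains v where "v \<noteq> (0,0,0)" "p = proj_class v"
  using assms unfolding P2_def by blast

lemma proj_class_in_P2: "v \<noteq> (0,0,0) \<Longrightarrow> proj_class v \<in> P2"
  unfolding P2_def by blast

lemma two_le_card_field: "2 \<le> CARD('a::{finite,field})"
proof -
  have "card {0, 1::'a} \<le> CARD('a)" by (rule card_mono) auto
  then show ?thesis by simp
qed

lemma card_proj_class:
  fixes v :: "'a::{finite,field} \<times> 'a \<times> 'a"
  assumes "v \<noteq> (0,0,0)"
  shows "card (proj_class v) = CARD('a) - 1"
proof -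
  have "proj_class v = (\<lambda>t. scale3 t v) ` (UNIV - {0})"
    by (rule set_eqI) (auto simp: mem_proj_class_iff image_iff)
  moreover have "inj_on (\<lambda>t. scale3 t v) (UNIV - {0})"
  proof (rule inj_onI)
    fix s t assume "scale3 s v = scale3 t v"
    then show "s = t" using assms by (cases v) (auto simp: mult_cancel_right)
  qed
  ultimately show ?thesis by (simp add: card_image card_Diff_singleton)
qed

lemma proj_class_disjoint:
  "proj_class v \<noteq> proj_class w \<Longrightarrow> proj_class v \<inter> proj_class (w::'a::field \<times> 'a \<times> 'a) = {}"
  using proj_class_eq_if_mem by blast

lemma Union_proj_classes:
  fixes S :: "('a::field \<times> 'a \<times> 'a) set"
  assumes closed: "\<And>v t. v \<in> S \<Longrightarrow> t \<noteq> 0 \<Longrightarrow> scale3 t v \<in> S"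
  shows "\<Union>{proj_class v | v. v \<in> S} = S"
proof
  show "\<Union>{proj_class v | v. v \<in> S} \<subseteq> S"
  proof
    fix w assume "w \<in> \<Union>{proj_class v | v. v \<in> S}"
    then obtain v where v: "v \<in> S" "w \<in> proj_class v" by blast
    then obtain t where "t \<noteq> 0" "w = scale3 t v" unfolding mem_proj_class_iff by blast
    then show "w \<in> S" using closed v(1) by simp
  qed
  show "S \<subseteq> \<Union>{proj_class v | v. v \<in> S}"
    using mem_proj_class_self by blast
qed

lemma card_proj_classes:
  fixes S :: "('a::{finite,field} \<times> 'a \<times> 'a) set"
  assumes nz: "(0,0,0) \<notin> S" and closed: "\<And>v t. v \<in> S \<Longrightarrow> t \<noteq> 0 \<Longrightarrow> scale3 t v \<in> S"
  shows "(CARD('a) - 1) * card {proj_class v | v. v \<in> S} = card S"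
proof -
  let ?C = "{proj_class v | v. v \<in> S}"
  have "(CARD('a) - 1) * card ?C = card (\<Union>?C)"
  proof (rule card_partition)
    show "card c = CARD('a) - 1" if "c \<in> ?C" for c
    proof -
      obtain v where "v \<in> S" "c = proj_class v" using \<open>c \<in> ?C\<close> by blast
      moreover have "v \<noteq> (0,0,0)" using \<open>v \<in> S\<close> nz by metis
      ultimately show ?thesis using card_proj_class by simp
    qed
    show "c1 \<inter> c2 = {}" if "c1 \<in> ?C" "c2 \<in> ?C" "c1 \<noteq> c2" for c1 c2
      using that proj_class_disjoint by blast
  qed simp_all
  then show ?thesis using Union_proj_classes[OF closed] by simp
qed

lemma card_P2: "card (P2 :: ('a::{finite,field} \<times> 'a \<times> 'a) set set) = CARD('a)^2 + CARD('a) + 1"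
proof -
  have "P2 = {proj_class v | v::'a \<times> 'a \<times> 'a. v \<in> UNIV - {(0,0,0)}}"
    unfolding P2_def by auto
  moreover have "(CARD('a) - 1) * card {proj_class v | v::'a \<times> 'a \<times> 'a. v \<in> UNIV - {(0,0,0)}}
      = card (UNIV - {(0,0,0)::'a \<times> 'a \<times> 'a})"
    by (rule card_proj_classes) (auto simp: scale3_neq_0)
  ultimately have "(CARD('a) - 1) * card (P2 :: ('a \<times> 'a \<times> 'a) set set)
      = card (UNIV - {(0,0,0)::'a \<times> 'a \<times> 'a})"
    by simp
  also have "\<dots> = CARD('a)^3 - 1" by (simp add: card_Diff_singleton power3_eq_cube)
  also have "\<dots> = (CARD('a) - 1) * (CARD('a)^2 + CARD('a) + 1)"
  proof -
    obtain m where "CARD('a) = Suc m" using two_le_card_field[where 'a='a] by (cases "CARD('a)") auto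
    then show ?thesis by (simp add: algebra_simps power2_eq_square power3_eq_cube)
  qed
  finally have "(CARD('a) - 1) * card (P2 :: ('a \<times> 'a \<times> 'a) set set)
      = (CARD('a) - 1) * (CARD('a)^2 + CARD('a) + 1)" .
  moreover have "CARD('a) - 1 \<noteq> 0" using two_le_card_field[where 'a='a] by simp
  ultimately show ?thesis using mult_left_cancel by blast
qed

lemma on_line_proj_class_iff: "on_line (proj_class u) (proj_class v) \<longleftrightarrow> dot3 u v = (0::'a::field)"
proof
  assume "on_line (proj_class u) (proj_class v)"
  then have "(\<lambda>(a,b,c). \<forall>(x,y,z)\<in>proj_class v. a*x + b*y + c*z = 0) u"
    unfolding on_line_def by (rule bspec) (rule mem_proj_class_self)
  then have "(\<lambda>(x,y,z). fst u * x + fst (snd u) * y + snd (snd u) * z = 0) v"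
    by (cases u) (simp, erule bspec, rule mem_proj_class_self)
  then show "dot3 u v = 0" unfolding dot3_def by (cases v) simp
next
  assume "dot3 u v = 0"
  show "on_line (proj_class u) (proj_class v)"
    unfolding on_line_def
  proof (intro ballI, clarify)
    fix a b c x y z assume "(a,b,c) \<in> proj_class u" "(x,y,z) \<in> proj_class v"
    then obtain s t where "(a,b,c) = scale3 s u" "(x,y,z) = scale3 t v"
      unfolding mem_proj_class_iff by blast
    then have "a*x + b*y + c*z = s * t * dot3 u v" unfolding scale3_def dot3_def by (auto simp: algebra_simps)
    then show "a*x + b*y + c*z = 0" using \<open>dot3 u v = 0\<close> by simp
  qed
qed

lemma on_line_commute: "on_line l p \<longleftrightarrow> on_line p (l :: ('a::field \<times> 'a \<times> 'a) set)"
proof -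
  have "on_line p l" if "on_line l p" for l p :: "('a \<times> 'a \<times> 'a) set"
    unfolding on_line_def
  proof clarify
    fix a b c x y z assume "(a,b,c) \<in> p" "(x,y,z) \<in> l"
    then have "x*a + y*b + z*c = 0" using that unfolding on_line_def by fastforce
    then show "a*x + b*y + c*z = 0" by (simp add: mult.commute)
  qed
  then show ?thesis by blast
qed

lemma dot3_scale3: "dot3 u (scale3 t v) = t * dot3 u (v::'a::field \<times> 'a \<times> 'a)"
  unfolding dot3_def scale3_def by (simp add: algebra_simps)

(* The level sets of v \<mapsto> dot3 u v are translates of each other and partition the q^3 vectors. *)
lemma card_dot3_eq_0:
  fixes u :: "'a::{finite,field} \<times> 'a \<times> 'a"
  assumes u: "u \<noteq> (0,0,0)"
  shows "card {v. dot3 u v = 0} = CARD('a)^2"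
proof -
  obtain w where w: "dot3 u w = 1"
  proof -
    obtain u1 u2 u3 where u_eq: "u = (u1,u2,u3)" by (cases u)
    consider "u1 \<noteq> 0" | "u2 \<noteq> 0" | "u3 \<noteq> 0" using u u_eq by auto
    then show thesis
      by cases (use that[of "(1/u1,0,0)"] that[of "(0,1/u2,0)"] that[of "(0,0,1/u3)"]
                in \<open>simp_all add: u_eq dot3_def\<close>)
  qed
  define tr where "tr t v = (fst v + t * fst w, fst (snd v) + t * fst (snd w), snd (snd v) + t * snd (snd w))"
    for t :: 'a and v :: "'a \<times> 'a \<times> 'a"
  have dot3_tr: "dot3 u (tr t v) = dot3 u v + t" for t v
  proof -
    have "dot3 u (tr t v) = dot3 u v + t * dot3 u w" unfolding tr_def dot3_def by (simp add: algebra_simps)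
    then show ?thesis using w by simp
  qed
  have level_set: "{v. dot3 u v = t} = tr t ` {v. dot3 u v = 0}" for t
  proof (rule set_eqI, rule iffI)
    fix v assume "v \<in> {v. dot3 u v = t}"
    then have "tr (-t) v \<in> {v. dot3 u v = 0}" "v = tr t (tr (-t) v)"
      using dot3_tr[of "-t" v] unfolding tr_def by auto
    then show "v \<in> tr t ` {v. dot3 u v = 0}" by blast
  qed (use dot3_tr in auto)
  have inj_tr: "inj (tr t)" for t
    unfolding tr_def by (rule injI) (auto simp: prod_eq_iff)
  have card_level_set: "card {v. dot3 u v = t} = card {v. dot3 u v = 0}" for t
    unfolding level_set[of t] by (rule card_image[OF inj_on_subset[OF inj_tr subset_UNIV]])
  have "CARD('a) * (CARD('a) * CARD('a)) = CARD('a \<times> 'a \<times> 'a)"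
    by (simp only: card_prod)
  also have "\<dots> = card (\<Union>t. {v. dot3 u v = t})"
    by (rule arg_cong[where f=card]) blast
  also have "\<dots> = (\<Sum>t\<in>UNIV. card {v. dot3 u v = t})"
    by (rule card_UN_disjoint) auto
  also have "\<dots> = (\<Sum>t\<in>(UNIV::'a set). card {v. dot3 u v = 0})"
    by (intro sum.cong refl card_level_set)
  finally show ?thesis by (simp add: power2_eq_square)
qed

lemma card_points_on_line:
  assumes "l \<in> (P2 :: ('a::{finite,field} \<times> 'a \<times> 'a) set set)"
  shows "card {p \<in> P2. on_line l p} = CARD('a) + 1"
proof -
  obtain u where u: "u \<noteq> (0,0,0)" "l = proj_class u" using assms by (rule P2E)
  define S where "S = {v. dot3 u v = 0} - {(0,0,0)}"
  have "{p \<in> P2. on_line l p} = {proj_class v | v. v \<in> S}"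
  proof (rule set_eqI, rule iffI)
    fix p assume p: "p \<in> {p \<in> P2. on_line l p}"
    then have "p \<in> P2" by simp
    then obtain v where v: "v \<noteq> (0,0,0)" "p = proj_class v" by (rule P2E)
    then have "v \<in> S" using p u(2) by (simp add: S_def on_line_proj_class_iff)
    then show "p \<in> {proj_class v | v. v \<in> S}" using v(2) by blast
  next
    fix p assume "p \<in> {proj_class v | v. v \<in> S}"
    then obtain v where "v \<in> S" "p = proj_class v" by blast
    then show "p \<in> {p \<in> P2. on_line l p}"
      unfolding S_def u(2) by (simp add: proj_class_in_P2 on_line_proj_class_iff)
  qed
  moreover have "(CARD('a) - 1) * card {proj_class v | v. v \<in> S} = card S"
    by (rule card_proj_classes) (auto simp: S_def dot3_scale3 scale3_neq_0)
  moreover have "card S = (CARD('a) - 1) * (CARD('a) + 1)"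
  proof -
    have "(0,0,0) \<in> {v. dot3 u v = 0}" unfolding dot3_def by simp
    then have "card S = CARD('a)^2 - 1"
      unfolding S_def using card_dot3_eq_0[OF u(1)] by (simp add: card_Diff_singleton)
    then show ?thesis by (simp add: power2_eq_square algebra_simps)
  qed
  ultimately have "(CARD('a) - 1) * card {p \<in> P2. on_line l p} = (CARD('a) - 1) * (CARD('a) + 1)"
    by simp
  moreover have "CARD('a) - 1 \<noteq> 0" using two_le_card_field[where 'a='a] by simp
  ultimately show ?thesis using mult_left_cancel by blast
qed

lemma card_lines_through_point:
  assumes "p \<in> (P2 :: ('a::{finite,field} \<times> 'a \<times> 'a) set set)"
  shows "card {l \<in> P2. on_line l p} = CARD('a) + 1"
  using card_points_on_line[OF assms] by (simp add: on_line_commute)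

lemma scale3_if_cross3_eq_0:
  fixes a u :: "'a::field \<times> 'a \<times> 'a"
  assumes u: "u \<noteq> (0,0,0)" and "cross3 a u = (0,0,0)"
  obtains t where "a = scale3 t u"
proof -
  obtain a1 a2 a3 where a_eq: "a = (a1,a2,a3)" by (cases a)
  obtain u1 u2 u3 where u_eq: "u = (u1,u2,u3)" by (cases u)
  have e: "a2 * u3 = a3 * u2" "a3 * u1 = a1 * u3" "a1 * u2 = a2 * u1"
    using \<open>cross3 a u = (0,0,0)\<close> unfolding a_eq u_eq cross3_def by auto
  consider "u1 \<noteq> 0" | "u1 = 0" "u2 \<noteq> 0" | "u1 = 0" "u2 = 0" "u3 \<noteq> 0" using u u_eq by auto
  then show thesis
  proof cases
    case 1
    then show thesis using e that[of "a1/u1"] unfolding a_eq u_eq by (auto simp: field_simps)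
  next
    case 2
    then show thesis using e that[of "a2/u2"] unfolding a_eq u_eq by (auto simp: field_simps)
  next
    case 3
    then show thesis using e that[of "a3/u3"] unfolding a_eq u_eq by (auto simp: field_simps)
  qed
qed

lemma cross3_neq_0:
  fixes v w :: "'a::field \<times> 'a \<times> 'a"
  assumes "v \<noteq> (0,0,0)" "w \<noteq> (0,0,0)" "proj_class v \<noteq> proj_class w"
  shows "cross3 v w \<noteq> (0,0,0)"
proof
  assume "cross3 v w = (0,0,0)"
  then have "cross3 w v = (0,0,0)" unfolding cross3_def by (auto simp: prod_eq_iff algebra_simps)
  then obtain t where t: "w = scale3 t v" using scale3_if_cross3_eq_0[OF assms(1)] by blast
  then have "t \<noteq> 0" using assms(2) unfolding scale3_def by auto
  then have "w \<in> proj_class v" using t unfolding mem_proj_class_iff by auto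
  then show False using proj_class_eq_if_mem assms(3) by metis
qed

lemma cross3_cross3:
  "cross3 a (cross3 v w) = (fst v * dot3 a w - fst w * dot3 a v,
                            fst (snd v) * dot3 a w - fst (snd w) * dot3 a v,
                            snd (snd v) * dot3 a w - snd (snd w) * dot3 a v)"
  unfolding cross3_def dot3_def by (simp add: algebra_simps)

lemma lines_through_two_points:
  fixes v w :: "'a::field \<times> 'a \<times> 'a"
  assumes "v \<noteq> (0,0,0)" "w \<noteq> (0,0,0)" "proj_class v \<noteq> proj_class w"
  shows "{l \<in> P2. on_line l (proj_class v) \<and> on_line l (proj_class w)} = {proj_class (cross3 v w)}"
proof (rule set_eqI, rule iffI)
  fix l assume l: "l \<in> {l \<in> P2. on_line l (proj_class v) \<and> on_line l (proj_class w)}"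
  then have "l \<in> P2" by simp
  then obtain a where a: "a \<noteq> (0,0,0)" "l = proj_class a" by (rule P2E)
  with l have "dot3 a v = 0" "dot3 a w = 0" by (simp_all add: on_line_proj_class_iff)
  then have "cross3 a (cross3 v w) = (0,0,0)" by (simp add: cross3_cross3)
  then obtain t where t: "a = scale3 t (cross3 v w)"
    using scale3_if_cross3_eq_0[OF cross3_neq_0[OF assms]] by blast
  then have "t \<noteq> 0" using a(1) unfolding scale3_def by auto
  then have "a \<in> proj_class (cross3 v w)" using t unfolding mem_proj_class_iff by auto
  then show "l \<in> {proj_class (cross3 v w)}" using a(2) proj_class_eq_if_mem by blast
next
  fix l assume "l \<in> {proj_class (cross3 v w)}"
  moreover have "dot3 (cross3 v w) v = 0" "dot3 (cross3 v w) w = 0"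
    unfolding dot3_def cross3_def by (simp_all add: algebra_simps)
  ultimately show "l \<in> {l \<in> P2. on_line l (proj_class v) \<and> on_line l (proj_class w)}"
    using proj_class_in_P2[OF cross3_neq_0[OF assms]] by (simp add: on_line_proj_class_iff)
qed

lemma card_lines_through_two_points:
  assumes "p \<in> (P2 :: ('a::{finite,field} \<times> 'a \<times> 'a) set set)" "p' \<in> P2" "p \<noteq> p'"
  shows "card {l \<in> P2. on_line l p \<and> on_line l p'} = 1"
proof -
  obtain v where v: "v \<noteq> (0,0,0)" "p = proj_class v" using assms(1) by (rule P2E)
  obtain w where w: "w \<noteq> (0,0,0)" "p' = proj_class w" using assms(2) by (rule P2E)
  show ?thesis using lines_through_two_points[OF v(1) w(1)] assms(3) v w by simp
qed

lemma proj_representatives: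
  assumes "Pts \<subseteq> (P2 :: ('a::field \<times> 'a \<times> 'a) set set)"
  obtains T where "card T = card Pts"
    and "\<And>v. v \<in> T \<Longrightarrow> v \<noteq> (0,0,0) \<and> proj_class v \<in> Pts"
    and "\<And>v t. v \<in> T \<Longrightarrow> scale3 t v \<in> T \<Longrightarrow> scale3 t v = v"
proof -
  define rep where "rep p = (SOME v. v \<in> p)" for p :: "('a \<times> 'a \<times> 'a) set"
  have rep: "rep p \<noteq> (0,0,0)" "proj_class (rep p) = p" if "p \<in> P2" for p
  proof -
    obtain v where v: "v \<noteq> (0,0,0)" "p = proj_class v" using \<open>p \<in> P2\<close> by (rule P2E)
    then have "v \<in> p" using mem_proj_class_self by metis
    then have "rep p \<in> p" unfolding rep_def by (rule someI)
    then show "rep p \<noteq> (0,0,0)" "proj_class (rep p) = p"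
      using nonzero_if_mem_proj_class proj_class_eq_if_mem v by metis+
  qed
  show thesis
  proof (rule that[of "rep ` Pts"])
    have "inj_on rep Pts"
      by (rule inj_onI) (metis assms rep(2) subsetD)
    then show "card (rep ` Pts) = card Pts" by (rule card_image)
    show "v \<noteq> (0,0,0) \<and> proj_class v \<in> Pts" if "v \<in> rep ` Pts" for v
      using that assms rep by auto
    show "scale3 t v = v" if vt: "v \<in> rep ` Pts" "scale3 t v \<in> rep ` Pts" for v t
    proof -
      obtain p p' where p: "p \<in> Pts" "v = rep p" "p' \<in> Pts" "scale3 t v = rep p'"
        using vt by blast
      then have "scale3 t v \<noteq> (0,0,0)" using assms rep(1) by auto
      then have "t \<noteq> 0" by (cases v) auto
      then have "scale3 t v \<in> proj_class v" unfolding mem_proj_class_iff by blast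
      then have "p' = p" using assms rep(2) p proj_class_eq_if_mem by (metis subsetD)
      then show ?thesis using p(2,4) by simp
    qed
  qed
qed

lemma card_rat_points_on_line_le:
  fixes F :: "('a::{finite,field}) tpoly"
  assumes hF: "homog (Suc n) F" and nc: "no_Fq_linear_components (Suc n) F" and "l \<in> P2"
  shows "card {p \<in> rat_points (Suc n) F. on_line l p} \<le> Suc n"
proof (rule ccontr)
  define Pts where "Pts = {p \<in> rat_points (Suc n) F. on_line l p}"
  assume "\<not> card Pts \<le> Suc n"
  obtain u where u: "u \<noteq> (0,0,0)" "l = proj_class u" using \<open>l \<in> P2\<close> by (rule P2E)
  obtain a b c where abc: "u = (a,b,c)" by (cases u)
  have "Pts \<subseteq> P2" unfolding Pts_def rat_points_def by auto
  obtain T where card_T: "card T = card Pts"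
    and T: "\<And>v. v \<in> T \<Longrightarrow> v \<noteq> (0,0,0) \<and> proj_class v \<in> Pts"
    and T_distinct: "\<And>v t. v \<in> T \<Longrightarrow> scale3 t v \<in> T \<Longrightarrow> scale3 t v = v"
    using proj_representatives[OF \<open>Pts \<subseteq> P2\<close>] by blast
  have "zeros_on_line (Suc n) F a b c T"
    unfolding zeros_on_line_def
  proof (intro conjI ballI allI impI)
    show "finite T" by simp
  next
    fix v assume "v \<in> T"
    then have "v \<noteq> (0,0,0)" "dot3 u v = 0" "tpoly_eval (Suc n) F v = 0"
      using T[OF \<open>v \<in> T\<close>] mem_proj_class_self[of v] u(2)
      unfolding Pts_def rat_points_def by (auto simp: on_line_proj_class_iff)
    then show "case v of (x,y,z) \<Rightarrow>
        (x,y,z) \<noteq> (0,0,0) \<and> a*x + b*y + c*z = 0 \<and> tpoly_eval (Suc n) F (x,y,z) = 0"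
      by (cases v) (simp add: abc dot3_def)
  next
    fix v t assume "v \<in> T" "scale3 t v \<in> T"
    then show "scale3 t v = v" by (rule T_distinct)
  qed
  then obtain G where "homog n G" "F = tpoly_mult (linform a b c) G"
    using linform_factor_if_zeros_on_line[OF hF] u(1) abc card_T \<open>\<not> card Pts \<le> Suc n\<close>
    by (metis not_less)
  then show False using nc u(1) abc unfolding no_Fq_linear_components_def by auto
qed

section \<open>Counting incidences\<close>

lemma sum_card_points_on_lines:
  assumes "C \<subseteq> (P2 :: ('a::{finite,field} \<times> 'a \<times> 'a) set set)"
  shows "(\<Sum>l\<in>P2. card {p \<in> C. on_line l p}) = card C * (CARD('a) + 1)"
proof -
  have "(\<Sum>l\<in>P2. card {p \<in> C. on_line l p}) = (\<Sum>p\<in>C. card {l \<in> P2. on_line l p})"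
    using sum.swap_restrict[of P2 C "\<lambda>_ _. 1::nat" on_line] by simp
  also have "\<dots> = (\<Sum>p\<in>C. CARD('a) + 1)"
    using assms by (intro sum.cong refl card_lines_through_point) auto
  finally show ?thesis by simp
qed

lemma sum_card_points_on_lines_squared:
  assumes "C \<subseteq> (P2 :: ('a::{finite,field} \<times> 'a \<times> 'a) set set)"
  shows "(\<Sum>l\<in>P2. card {p \<in> C. on_line l p}^2) = card C * (card C + CARD('a))"
proof -
  let ?on = "\<lambda>l pp. on_line l (fst pp) \<and> on_line l (snd pp)"
  have "card {p \<in> C. on_line l p}^2 = card {pp \<in> C \<times> C. ?on l pp}" for l
  proof -
    have "{pp \<in> C \<times> C. ?on l pp} = {p \<in> C. on_line l p} \<times> {p \<in> C. on_line l p}" by auto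
    then show ?thesis by (simp add: card_cartesian_product power2_eq_square)
  qed
  then have "(\<Sum>l\<in>P2. card {p \<in> C. on_line l p}^2) = (\<Sum>l\<in>P2. card {pp \<in> C \<times> C. ?on l pp})"
    by simp
  also have "\<dots> = (\<Sum>pp\<in>C \<times> C. card {l \<in> P2. ?on l pp})"
    using sum.swap_restrict[of P2 "C \<times> C" "\<lambda>_ _. 1::nat" ?on] by simp
  also have "\<dots> = (\<Sum>(p,p')\<in>C \<times> C. if p = p' then CARD('a) + 1 else 1)"
  proof (rule sum.cong[OF refl], clarify)
    fix p p' assume "p \<in> C" "p' \<in> C"
    then have "p \<in> P2" "p' \<in> P2" using assms by auto
    then show "card {l \<in> P2. ?on l (p,p')} = (if p = p' then CARD('a) + 1 else 1)"
      by (cases "p = p'") (simp_all add: card_lines_through_point card_lines_through_two_points)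
  qed
  also have "\<dots> = (\<Sum>p\<in>C. \<Sum>p'\<in>C. if p = p' then CARD('a) + 1 else 1)"
    by (simp add: sum.cartesian_product)
  also have "\<dots> = (\<Sum>p\<in>C. CARD('a) + card C)"
  proof (rule sum.cong[OF refl])
    fix p assume "p \<in> C"
    have "(\<Sum>p'\<in>C. if p = p' then CARD('a) + 1 else 1) = (\<Sum>p'\<in>C. 1 + (if p = p' then CARD('a) else 0))"
      by (intro sum.cong refl) simp
    also have "\<dots> = (\<Sum>p'\<in>C. 1) + (\<Sum>p'\<in>C. if p = p' then CARD('a) else 0)"
      by (rule sum.distrib)
    also have "\<dots> = CARD('a) + card C"
      using \<open>p \<in> C\<close> finite_subset[OF assms] by simp
    finally show "(\<Sum>p'\<in>C. if p = p' then CARD('a) + 1 else 1) = CARD('a) + card C" .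
  qed
  finally show ?thesis by (simp add: add.commute)
qed

lemma exists_line_meeting_few_points:
  fixes X :: "('a::{finite,field} \<times> 'a \<times> 'a) set set"
  assumes q5: "5 \<le> CARD('a)" and "X \<subseteq> P2" and card_X: "card X = (CARD('a) - 1)^2"
    and at_most: "\<And>l. l \<in> P2 \<Longrightarrow> card {p \<in> X. on_line l p} \<le> CARD('a) - 1"
  shows "\<exists>l\<in>P2. card {p \<in> X. on_line l p} \<le> CARD('a) - 4"
proof (rule ccontr)
  assume at_least: "\<not> ?thesis"
  define q where "q = CARD('a)"
  define C where "C = P2 - X"
  define c where "c l = card {p \<in> C. on_line l p}" for l
  have "C \<subseteq> P2" unfolding C_def by blast
  have c_bounds: "2 \<le> c l \<and> c l \<le> 4" if "l \<in> P2" for l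
  proof -
    have "{p \<in> P2. on_line l p} = {p \<in> X. on_line l p} \<union> {p \<in> C. on_line l p}"
      using \<open>X \<subseteq> P2\<close> unfolding C_def by auto
    moreover have "card ({p \<in> X. on_line l p} \<union> {p \<in> C. on_line l p})
        = card {p \<in> X. on_line l p} + c l"
      unfolding c_def by (rule card_Un_disjoint) (auto simp: C_def)
    ultimately have "card {p \<in> X. on_line l p} + c l = q + 1"
      using card_points_on_line[OF that] unfolding q_def by simp
    then show ?thesis using at_most[OF that] at_least that q5 unfolding q_def by fastforce
  qed
  have card_C: "int (card C) = 3 * int q"
  proof -
    have "card C = card (P2 :: ('a \<times> 'a \<times> 'a) set set) - card X"
      unfolding C_def using \<open>X \<subseteq> P2\<close> by (simp add: card_Diff_subset)
    moreover have "card X \<le> card (P2 :: ('a \<times> 'a \<times> 'a) set set)"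
      using \<open>X \<subseteq> P2\<close> by (simp add: card_mono)
    ultimately have "int (card C) = int (q^2 + q + 1) - int ((q - 1)^2)"
      using card_P2[where 'a='a] card_X unfolding q_def by (simp add: of_nat_diff)
    moreover have "int ((q - 1)^2) = (int q - 1)^2" using q5 unfolding q_def by (simp add: of_nat_diff)
    ultimately show ?thesis by (simp add: power2_eq_square algebra_simps)
  qed
  have "(\<Sum>l\<in>P2. (int (c l) - 2) * (int (c l) - 4)) \<le> 0"
    using c_bounds by (intro sum_nonpos mult_nonneg_nonpos) auto
  moreover have "(\<Sum>l\<in>P2. (int (c l) - 2) * (int (c l) - 4))
      = int (\<Sum>l\<in>P2. c l^2) - 6 * int (\<Sum>l\<in>P2. c l) + 8 * int (card (P2 :: ('a \<times> 'a \<times> 'a) set set))"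
    by (simp add: algebra_simps power2_eq_square sum.distrib sum_subtractf sum_distrib_left of_nat_sum)
  moreover have "\<dots> = 2 * ((int q - 1) * (int q - 4))"
    using sum_card_points_on_lines[OF \<open>C \<subseteq> P2\<close>] sum_card_points_on_lines_squared[OF \<open>C \<subseteq> P2\<close>]
      card_P2[where 'a='a] card_C
    unfolding c_def q_def[symmetric] by (simp add: algebra_simps power2_eq_square)
  moreover have "(int q - 1) * (int q - 4) > 0" using q5 unfolding q_def by simp
  ultimately show False by linarith
qed

theorem lemma3p13:
  fixes F :: "('a::{finite,field}) tpoly"
  assumes "CARD('a) \<ge> 5"
    and "homog (CARD('a) - 1) F" and "F \<noteq> (\<lambda>_. 0)"
    and "no_Fq_linear_components (CARD('a) - 1) F"
    and "Nq (CARD('a) - 1) F = (CARD('a) - 1)^2"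
  shows "k0 (CARD('a) - 1) F \<le> CARD('a) - 4"
proof -
  define d where "d = CARD('a) - 1"
  define n where "n = CARD('a) - 2"
  have d: "d = Suc n" using assms(1) unfolding d_def n_def by simp
  have "card {p \<in> rat_points d F. on_line l p} \<le> CARD('a) - 1" if "l \<in> P2" for l
    using card_rat_points_on_line_le[of n F l] assms(2,4) that unfolding d_def[symmetric] d by simp
  then obtain l where l: "l \<in> P2" "card {p \<in> rat_points d F. on_line l p} \<le> CARD('a) - 4"
    using exists_line_meeting_few_points[OF assms(1), of "rat_points d F"] assms(5)
    unfolding Nq_def d_def rat_points_def by auto
  then have "a_count d F (card {p \<in> rat_points d F. on_line l p}) \<noteq> 0"
    unfolding a_count_def lines_def by (auto simp: card_eq_0_iff)
  then have "k0 d F \<le> card {p \<in> rat_points d F. on_line l p}"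
    unfolding k0_def by (rule Least_le)
  then show ?thesis using l(2) unfolding d_def by simp
qed

end
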